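(* Let $G$ be a chordal graph that is $1$-extendable and let $v$ be a simplicial vertex of $G$. Then $G-N[v]$ is $1$-extendable.
   Context: All graphs are finite and simple. A chordal graph is a graph with no induced cycle of length at least four. A vertex $v$ is simplicial if its neighbourhood $N(v)$ induces a complete graph; $N[v]=N(v)\cup\{v\}$. A graph is $1$-extendable if every vertex belongs to some maximum independent set. $G-N[v]$ denotes the subgraph of $G$ induced by $V(G)\setminus N[v]$. *)

theory Defs
  imports Main
begin

definition graph :: "'a set \<Rightarrow> ('a \<Rightarrow> 'a \<Rightarrow> bool) \<Rightarrow> bool" where
  "graph V E \<longleftrightarrow> finite V \<and> (\<forall>x y. E x y \<longrightarrow> x \<in> V \<and> y \<in> V)
      \<and> (\<forall>x y. E x y \<longrightarrow> E y x) \<and> (\<forall>x. \<not> E x x)"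

definition induced_edges :: "'a set \<Rightarrow> ('a \<Rightarrow> 'a \<Rightarrow> bool) \<Rightarrow> 'a \<Rightarrow> 'a \<Rightarrow> bool" where
  "induced_edges S E = (\<lambda>x y. E x y \<and> x \<in> S \<and> y \<in> S)"

definition nbhd :: "('a \<Rightarrow> 'a \<Rightarrow> bool) \<Rightarrow> 'a \<Rightarrow> 'a set" where
  "nbhd E v = {u. E v u}"

definition closed_nbhd :: "('a \<Rightarrow> 'a \<Rightarrow> bool) \<Rightarrow> 'a \<Rightarrow> 'a set" where
  "closed_nbhd E v = insert v (nbhd E v)"

definition induced_cycle :: "'a set \<Rightarrow> ('a \<Rightarrow> 'a \<Rightarrow> bool) \<Rightarrow> 'a list \<Rightarrow> bool" where
  "induced_cycle V E c \<longleftrightarrow> length c \<ge> 3 \<and> distinct c \<and> set c \<subseteq> V \<and>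
     (\<forall>i<length c. \<forall>j<length c.
        E (c ! i) (c ! j) \<longleftrightarrow> (j = (i + 1) mod length c \<or> i = (j + 1) mod length c))"

definition chordal :: "'a set \<Rightarrow> ('a \<Rightarrow> 'a \<Rightarrow> bool) \<Rightarrow> bool" where
  "chordal V E \<longleftrightarrow> (\<nexists>c. induced_cycle V E c \<and> length c \<ge> 4)"

definition simplicial :: "'a set \<Rightarrow> ('a \<Rightarrow> 'a \<Rightarrow> bool) \<Rightarrow> 'a \<Rightarrow> bool" where
  "simplicial V E v \<longleftrightarrow> v \<in> V \<and> (\<forall>x\<in>nbhd E v. \<forall>y\<in>nbhd E v. x \<noteq> y \<longrightarrow> E x y)"

definition independent_set :: "'a set \<Rightarrow> ('a \<Rightarrow> 'a \<Rightarrow> bool) \<Rightarrow> 'a set \<Rightarrow> bool" where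
  "independent_set V E I \<longleftrightarrow> I \<subseteq> V \<and> (\<forall>x\<in>I. \<forall>y\<in>I. \<not> E x y)"

definition max_independent_set :: "'a set \<Rightarrow> ('a \<Rightarrow> 'a \<Rightarrow> bool) \<Rightarrow> 'a set \<Rightarrow> bool" where
  "max_independent_set V E I \<longleftrightarrow> independent_set V E I \<and>
     (\<forall>J. independent_set V E J \<longrightarrow> card J \<le> card I)"

definition one_extendable :: "'a set \<Rightarrow> ('a \<Rightarrow> 'a \<Rightarrow> bool) \<Rightarrow> bool" where
  "one_extendable V E \<longleftrightarrow> (\<forall>v\<in>V. \<exists>I. max_independent_set V E I \<and> v \<in> I)"

end

theory Submission
  imports Defs
begin

text \<open>Every independent set meets the clique \<open>N[v]\<close> of a simplicial vertex \<open>v\<close> in at most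
  one vertex, while \<open>v\<close> can be added to any independent set of \<open>G - N[v]\<close>. Hence deleting
  \<open>N[v]\<close> from a maximum independent set \<open>I\<close> of \<open>G\<close> leaves a maximum independent set of
  \<open>G - N[v]\<close>, and every vertex of \<open>G - N[v]\<close> lying in \<open>I\<close> survives.\<close>

lemma independent_set_induced_edges_iff:
  "independent_set S (induced_edges S E) J \<longleftrightarrow> independent_set S E J"
  unfolding independent_set_def induced_edges_def by blast

lemma independent_set_Diff:
  "independent_set V E I \<Longrightarrow> independent_set (V - A) E (I - A)"
  unfolding independent_set_def by blast

lemma card_independent_Int_closed_nbhd_le_1:
  assumes "independent_set V E I" and "simplicial V E v"
  shows "card (I \<inter> closed_nbhd E v) \<le> 1"
proof -
  have "x = y" if "x \<in> I \<inter> closed_nbhd E v" "y \<in> I \<inter> closed_nbhd E v" for x y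
    using that assms unfolding independent_set_def simplicial_def closed_nbhd_def nbhd_def
    by blast
  then show ?thesis
    by (cases "finite (I \<inter> closed_nbhd E v)") (auto simp: card_le_Suc0_iff_eq)
qed

lemma independent_set_insert_simplicial:
  assumes "graph V E" and "simplicial V E v"
    and "independent_set (V - closed_nbhd E v) E J"
  shows "independent_set V E (insert v J)"
  using assms unfolding graph_def simplicial_def independent_set_def closed_nbhd_def nbhd_def
  by blast

lemma max_independent_set_Diff_closed_nbhd:
  assumes G: "graph V E" and v: "simplicial V E v" and I: "max_independent_set V E I"
  shows "max_independent_set (V - closed_nbhd E v) (induced_edges (V - closed_nbhd E v) E)
           (I - closed_nbhd E v)"
proof -
  let ?N = "closed_nbhd E v"
  have I_ind: "independent_set V E I"
    using I unfolding max_independent_set_def by blast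
  have "finite I"
    using G I_ind unfolding graph_def independent_set_def by (blast intro: finite_subset)
  have "card I \<le> card (I - ?N) + card (I \<inter> ?N)"
    using card_Un_le[of "I - ?N" "I \<inter> ?N"] by (simp add: Un_Diff_Int)
  then have card_I: "card I \<le> card (I - ?N) + 1"
    using card_independent_Int_closed_nbhd_le_1[OF I_ind v] by linarith
  have "card J \<le> card (I - ?N)" if J: "independent_set (V - ?N) E J" for J
  proof -
    have "finite J" "v \<notin> J"
      using J G unfolding independent_set_def graph_def closed_nbhd_def
      by (auto intro: finite_subset)
    moreover have "card (insert v J) \<le> card I"
      using I independent_set_insert_simplicial[OF G v J] unfolding max_independent_set_def
      by blast
    ultimately show ?thesis
      using card_I by simp
  qed
  then show ?thesis
    using independent_set_Diff[OF I_ind]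
    unfolding max_independent_set_def independent_set_induced_edges_iff by blast
qed

theorem lemma4:
  fixes V :: "'a set" and E :: "'a \<Rightarrow> 'a \<Rightarrow> bool" and v :: 'a
  assumes "graph V E"
    and "chordal V E"
    and "one_extendable V E"
    and "simplicial V E v"
  shows "one_extendable (V - closed_nbhd E v) (induced_edges (V - closed_nbhd E v) E)"
  unfolding one_extendable_def
proof
  fix u assume u: "u \<in> V - closed_nbhd E v"
  then obtain I where "max_independent_set V E I" "u \<in> I"
    using assms(3) unfolding one_extendable_def by blast
  then show "\<exists>I. max_independent_set (V - closed_nbhd E v)
                   (induced_edges (V - closed_nbhd E v) E) I \<and> u \<in> I"
    using u max_independent_set_Diff_closed_nbhd[OF assms(1,4)] by blast
qed

end
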